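(* Let $P=(P_1,\ldots,P_n)$ be a reduced profile of linear orders on a finite set of alternatives $A$, with voter set $N=\{1,\ldots,n\}$, and suppose $P$ is single-crossing with respect to some tree on $N$. Then the tree on $N$ which is minimal with respect to $P$ and with respect to which $P$ is single-crossing is unique.
   Context: Voter $i$ prefers $a$ to $b$ is written $a\succ_i b$. A profile is reduced if no two voters have identical linear orders. Given a tree $T=(N,E)$ on the voter set, the profile is single-crossing with respect to $T$ if for every pair of distinct alternatives $a,b$ one of the following holds: (i) there is an edge $e\in E$ (an "$ab$-cut") such that, removing $e$ from $T$, the two resulting subtrees have vertex sets $V_1,V_2$ with all voters in $V_1$ preferring $a$ to $b$ and all voters in $V_2$ preferring $b$ to $a$; or (ii) all voters prefer $a$ to $b$, or all voters prefer $b$ to $a$. $T$ is minimal with respect to $P$ if every edge of $T$ is an $ab$-cut for some pair of alternatives $a,b$. *)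

theory Defs
  imports Main
begin

text \<open>Voters are natural numbers; a profile assigns to each voter i a strict
linear order P i on the alternatives A, where (a,b) \<in> P i means a \<succ>_i b.\<close>

definition profile :: "'a set \<Rightarrow> nat set \<Rightarrow> (nat \<Rightarrow> ('a \<times> 'a) set) \<Rightarrow> bool" where
  "profile A N P \<longleftrightarrow> (\<forall>i\<in>N. strict_linear_order_on A (P i) \<and> P i \<subseteq> A \<times> A)"

definition reduced :: "nat set \<Rightarrow> (nat \<Rightarrow> ('a \<times> 'a) set) \<Rightarrow> bool" where
  "reduced N P \<longleftrightarrow> (\<forall>i\<in>N. \<forall>j\<in>N. i \<noteq> j \<longrightarrow> P i \<noteq> P j)"

definition adj :: "'v set set \<Rightarrow> ('v \<times> 'v) set" where
  "adj E = {(u, v). {u, v} \<in> E}"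

definition is_graph :: "'v set \<Rightarrow> 'v set set \<Rightarrow> bool" where
  "is_graph V E \<longleftrightarrow> (\<forall>e\<in>E. \<exists>u v. e = {u, v} \<and> u \<noteq> v \<and> u \<in> V \<and> v \<in> V)"

definition connected_graph :: "'v set \<Rightarrow> 'v set set \<Rightarrow> bool" where
  "connected_graph V E \<longleftrightarrow> (\<forall>u\<in>V. \<forall>v\<in>V. (u, v) \<in> (adj E)\<^sup>*)"

definition is_cycle :: "'v set set \<Rightarrow> 'v list \<Rightarrow> bool" where
  "is_cycle E cs \<longleftrightarrow> length cs \<ge> 3 \<and> distinct cs
     \<and> (\<forall>k. Suc k < length cs \<longrightarrow> {cs ! k, cs ! Suc k} \<in> E)
     \<and> {last cs, hd cs} \<in> E"

definition acyclic_graph :: "'v set set \<Rightarrow> bool" where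
  "acyclic_graph E \<longleftrightarrow> (\<nexists>cs. is_cycle E cs)"

definition is_tree :: "'v set \<Rightarrow> 'v set set \<Rightarrow> bool" where
  "is_tree V E \<longleftrightarrow> is_graph V E \<and> connected_graph V E \<and> acyclic_graph E"

definition ab_cut :: "nat set set \<Rightarrow> (nat \<Rightarrow> ('a \<times> 'a) set) \<Rightarrow> 'a \<Rightarrow> 'a \<Rightarrow> nat set \<Rightarrow> bool" where
  "ab_cut E P a b e \<longleftrightarrow> e \<in> E \<and> (\<exists>u v. e = {u, v} \<and> u \<noteq> v
     \<and> (\<forall>w. (u, w) \<in> (adj (E - {e}))\<^sup>* \<longrightarrow> (a, b) \<in> P w)
     \<and> (\<forall>w. (v, w) \<in> (adj (E - {e}))\<^sup>* \<longrightarrow> (b, a) \<in> P w))"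

definition single_crossing_tree ::
  "'a set \<Rightarrow> nat set \<Rightarrow> (nat \<Rightarrow> ('a \<times> 'a) set) \<Rightarrow> nat set set \<Rightarrow> bool" where
  "single_crossing_tree A N P E \<longleftrightarrow>
     (\<forall>a\<in>A. \<forall>b\<in>A. a \<noteq> b \<longrightarrow>
        (\<exists>e\<in>E. ab_cut E P a b e)
        \<or> (\<forall>i\<in>N. (a, b) \<in> P i) \<or> (\<forall>i\<in>N. (b, a) \<in> P i))"

definition minimal_tree ::
  "'a set \<Rightarrow> (nat \<Rightarrow> ('a \<times> 'a) set) \<Rightarrow> nat set set \<Rightarrow> bool" where
  "minimal_tree A P E \<longleftrightarrow> (\<forall>e\<in>E. \<exists>a\<in>A. \<exists>b\<in>A. a \<noteq> b \<and> ab_cut E P a b e)"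

end

theory Submission
  imports Defs
begin

text \<open>A voter w lies between u and v if it agrees with every comparison on which u and v
agree. Every edge of a single-crossing tree is a bridge whose two sides are told apart by a
pair of alternatives, and this forces: {u,v} is an edge iff no third voter lies between u
and v. So the tree is determined by the profile, and it is automatically minimal.\<close>

definition between :: "(nat \<Rightarrow> ('a \<times> 'a) set) \<Rightarrow> nat \<Rightarrow> nat \<Rightarrow> nat \<Rightarrow> bool" where
  "between P u v w \<longleftrightarrow> (\<forall>c d. (c, d) \<in> P u \<and> (c, d) \<in> P v \<longrightarrow> (c, d) \<in> P w)"

definition betweenness_edges :: "(nat \<Rightarrow> ('a \<times> 'a) set) \<Rightarrow> nat set \<Rightarrow> nat set set" where
  "betweenness_edges P N = {{u, v} |u v. u \<in> N \<and> v \<in> N \<and> u \<noteq> v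
     \<and> (\<forall>w\<in>N. between P u v w \<longrightarrow> w = u \<or> w = v)}"

lemma profile_asym:
  "profile A N P \<Longrightarrow> i \<in> N \<Longrightarrow> (a, b) \<in> P i \<Longrightarrow> (b, a) \<notin> P i"
  unfolding profile_def strict_linear_order_on_def trans_def irrefl_def by blast

lemma profile_total:
  "profile A N P \<Longrightarrow> i \<in> N \<Longrightarrow> a \<in> A \<Longrightarrow> b \<in> A \<Longrightarrow> a \<noteq> b \<Longrightarrow> (a, b) \<notin> P i
    \<Longrightarrow> (b, a) \<in> P i"
  unfolding profile_def strict_linear_order_on_def total_on_def by blast

lemma profile_pair_in:
  "profile A N P \<Longrightarrow> i \<in> N \<Longrightarrow> (a, b) \<in> P i \<Longrightarrow> a \<in> A \<and> b \<in> A \<and> a \<noteq> b"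
  unfolding profile_def strict_linear_order_on_def irrefl_def by blast

lemma reduced_profile_disagree:
  assumes "profile A N P" "reduced N P" "x \<in> N" "y \<in> N" "x \<noteq> y"
  shows "\<exists>a b. (a, b) \<in> P x \<and> (b, a) \<in> P y"
proof -
  have "P x \<noteq> P y" using assms(2-5) unfolding reduced_def by blast
  then obtain a b where "(a, b) \<in> P x \<and> (a, b) \<notin> P y \<or> (a, b) \<in> P y \<and> (a, b) \<notin> P x"
    by auto
  then show ?thesis
  proof
    assume "(a, b) \<in> P x \<and> (a, b) \<notin> P y"
    then show ?thesis
      using profile_total[OF assms(1,4)] profile_pair_in[OF assms(1,3)] by blast
  next
    assume "(a, b) \<in> P y \<and> (a, b) \<notin> P x"
    then show ?thesis
      using profile_total[OF assms(1,3)] profile_pair_in[OF assms(1,4)] by blast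
  qed
qed

lemma ab_cut_swap:
  assumes "ab_cut E P a b e"
  shows "ab_cut E P b a e"
proof -
  obtain u v where "e \<in> E" "e = {u, v}" "u \<noteq> v"
    "\<forall>w. (u, w) \<in> (adj (E - {e}))\<^sup>* \<longrightarrow> (a, b) \<in> P w"
    "\<forall>w. (v, w) \<in> (adj (E - {e}))\<^sup>* \<longrightarrow> (b, a) \<in> P w"
    using assms unfolding ab_cut_def by blast
  moreover have "e = {v, u}" using \<open>e = {u, v}\<close> by (simp add: insert_commute)
  ultimately show ?thesis unfolding ab_cut_def by blast
qed

lemma adj_rtrancl_sym: "(x, y) \<in> (adj E)\<^sup>* \<Longrightarrow> (y, x) \<in> (adj E)\<^sup>*"
proof -
  have "sym (adj E)" by (auto simp: sym_def adj_def insert_commute)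
  then have "sym ((adj E)\<^sup>*)" by (rule sym_rtrancl)
  then show "(x, y) \<in> (adj E)\<^sup>* \<Longrightarrow> (y, x) \<in> (adj E)\<^sup>*" by (auto simp: sym_def)
qed

lemma adj_rtrancl_mono: "E \<subseteq> F \<Longrightarrow> (adj E)\<^sup>* \<subseteq> (adj F)\<^sup>*"
  by (rule rtrancl_mono) (auto simp: adj_def)

lemma is_graph_edgeD: "is_graph V E \<Longrightarrow> {x, y} \<in> E \<Longrightarrow> x \<in> V \<and> y \<in> V \<and> x \<noteq> y"
proof -
  assume "is_graph V E" "{x, y} \<in> E"
  then obtain u v where "{x, y} = {u, v}" "u \<noteq> v" "u \<in> V" "v \<in> V"
    unfolding is_graph_def by blast
  then show ?thesis by (auto simp: doubleton_eq_iff)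
qed

lemma connected_graphD: "connected_graph V E \<Longrightarrow> u \<in> V \<Longrightarrow> v \<in> V \<Longrightarrow> (u, v) \<in> (adj E)\<^sup>*"
  unfolding connected_graph_def by blast

lemma connected_graph_remove_edge:
  assumes "is_graph V E" "connected_graph V E" "{u, v} \<in> E" "t \<in> V"
  shows "(u, t) \<in> (adj (E - {{u, v}}))\<^sup>* \<or> (v, t) \<in> (adj (E - {{u, v}}))\<^sup>*"
proof -
  have "u \<in> V" using is_graph_edgeD[OF assms(1,3)] by blast
  then have "(u, t) \<in> (adj E)\<^sup>*" using connected_graphD[OF assms(2) _ assms(4)] by blast
  then show ?thesis
  proof (induction rule: rtrancl_induct)
    case (step s t)
    show ?case
    proof (cases "{s, t} = {u, v}")
      case True
      then have "t = u \<or> t = v" by (auto simp: doubleton_eq_iff)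
      then show ?thesis by blast
    next
      case False
      then have "(s, t) \<in> adj (E - {{u, v}})" using step by (auto simp: adj_def)
      then show ?thesis using step.IH by (meson rtrancl.rtrancl_into_rtrancl)
    qed
  qed simp
qed

lemma rtrancl_adj_last_exit:
  assumes "(u, v) \<in> (adj E)\<^sup>*" "v \<noteq> u"
  shows "\<exists>w. {u, w} \<in> E \<and> (w, v) \<in> (adj (E - {e. u \<in> e}))\<^sup>*"
  using assms
proof (induction rule: rtrancl_induct)
  case (step s t)
  then have st: "{s, t} \<in> E" by (simp add: adj_def)
  show ?case
  proof (cases "s = u")
    case True
    then show ?thesis using st by blast
  next
    case False
    then obtain w where "{u, w} \<in> E" "(w, s) \<in> (adj (E - {e. u \<in> e}))\<^sup>*"
      using step.IH by blast
    moreover have "(s, t) \<in> adj (E - {e. u \<in> e})"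
      using st False step.prems by (auto simp: adj_def)
    ultimately show ?thesis by (meson rtrancl.rtrancl_into_rtrancl)
  qed
qed simp

locale single_crossing_graph =
  fixes A :: "'a set" and N :: "nat set" and P :: "nat \<Rightarrow> ('a \<times> 'a) set"
    and T :: "nat set set"
  assumes profile: "profile A N P" and reduced: "reduced N P"
    and graph: "is_graph N T" and connected: "connected_graph N T"
    and single_crossing: "single_crossing_tree A N P T"
begin

lemma edgeD: "{x, y} \<in> T \<Longrightarrow> x \<in> N \<and> y \<in> N \<and> x \<noteq> y"
  using is_graph_edgeD[OF graph] .

lemma ab_cut_reach_pref:
  assumes "ab_cut T P a b g" "s \<in> N" "(s, t) \<in> (adj (T - {g}))\<^sup>*" "(a, b) \<in> P s"
  shows "(a, b) \<in> P t"
proof -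
  obtain u v where g: "g \<in> T" "g = {u, v}"
    and u_side: "\<forall>w. (u, w) \<in> (adj (T - {g}))\<^sup>* \<longrightarrow> (a, b) \<in> P w"
    and v_side: "\<forall>w. (v, w) \<in> (adj (T - {g}))\<^sup>* \<longrightarrow> (b, a) \<in> P w"
    using assms(1) unfolding ab_cut_def by blast
  have "(v, s) \<notin> (adj (T - {g}))\<^sup>*"
    using v_side profile_asym[OF profile] assms(2,4) by blast
  then have "(u, s) \<in> (adj (T - {g}))\<^sup>*"
    using connected_graph_remove_edge[OF graph connected] g assms(2) by blast
  then show ?thesis using assms(3) u_side by (meson rtrancl_trans)
qed

lemma ab_cut_exists:
  assumes "x \<in> N" "y \<in> N" "(a, b) \<in> P x" "(b, a) \<in> P y"
  shows "\<exists>g\<in>T. ab_cut T P a b g"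
proof -
  have "a \<in> A" "b \<in> A" "a \<noteq> b" using profile_pair_in[OF profile] assms(1,3) by blast+
  moreover have "(b, a) \<notin> P x" "(a, b) \<notin> P y"
    using profile_asym[OF profile] assms by blast+
  ultimately show ?thesis
    using single_crossing assms(1,2) unfolding single_crossing_tree_def by blast
qed

text \<open>The cut of a pair on which the ends of an edge disagree must be that edge itself,
since any other cut leaves its ends connected.\<close>

lemma edge_is_ab_cut:
  assumes "{x, y} \<in> T" "(a, b) \<in> P x" "(b, a) \<in> P y"
  shows "ab_cut T P a b {x, y}"
proof -
  have xy: "x \<in> N" "y \<in> N" using edgeD assms(1) by auto
  obtain g where g: "g \<in> T" "ab_cut T P a b g" using ab_cut_exists xy assms(2,3) by blast
  show ?thesis
  proof (cases "g = {x, y}")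
    case False
    then have "(x, y) \<in> (adj (T - {g}))\<^sup>*" using assms(1) by (auto simp: adj_def)
    then have "(a, b) \<in> P y" using ab_cut_reach_pref g xy assms(2) by blast
    then show ?thesis using profile_asym[OF profile] xy(2) assms(3) by blast
  qed (use g in simp)
qed

lemma edge_ab_cut_exists:
  assumes "{x, y} \<in> T"
  shows "\<exists>a b. (a, b) \<in> P x \<and> (b, a) \<in> P y \<and> ab_cut T P a b {x, y}"
proof -
  obtain a b where "(a, b) \<in> P x" "(b, a) \<in> P y"
    using reduced_profile_disagree[OF profile reduced] edgeD[OF assms] by blast
  then show ?thesis using edge_is_ab_cut[OF assms] by blast
qed

lemma edge_is_bridge:
  assumes "{x, y} \<in> T"
  shows "(x, y) \<notin> (adj (T - {{x, y}}))\<^sup>*"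
proof
  assume reach: "(x, y) \<in> (adj (T - {{x, y}}))\<^sup>*"
  obtain a b where ab: "(a, b) \<in> P x" "(b, a) \<in> P y" and cut: "ab_cut T P a b {x, y}"
    using edge_ab_cut_exists[OF assms] by blast
  have "x \<in> N" "y \<in> N" using edgeD[OF assms] by blast+
  then have "(a, b) \<in> P y" using ab_cut_reach_pref[OF cut _ reach ab(1)] by blast
  then show False using profile_asym[OF profile \<open>y \<in> N\<close>] ab(2) by blast
qed

lemma minimal_tree: "minimal_tree A P T"
  unfolding minimal_tree_def
proof
  fix e assume "e \<in> T"
  then obtain x y where e: "e = {x, y}" "x \<in> N"
    using graph unfolding is_graph_def by blast
  with \<open>e \<in> T\<close> have "{x, y} \<in> T" by simp
  obtain a b where "(a, b) \<in> P x" "ab_cut T P a b {x, y}"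
    using edge_ab_cut_exists[OF \<open>{x, y} \<in> T\<close>] by blast
  moreover have "a \<in> A \<and> b \<in> A \<and> a \<noteq> b"
    using profile_pair_in[OF profile e(2) \<open>(a, b) \<in> P x\<close>] .
  ultimately show "\<exists>a\<in>A. \<exists>b\<in>A. a \<noteq> b \<and> ab_cut T P a b e"
    using e(1) by blast
qed

lemma between_edge_reach:
  assumes "{x, y} \<in> T" "w \<in> N" "w \<noteq> x" "between P x y w"
  shows "(y, w) \<in> (adj (T - {{x, y}}))\<^sup>*"
proof -
  have x: "x \<in> N" and y: "y \<in> N" using edgeD assms(1) by blast+
  obtain a b where ab: "(a, b) \<in> P x" "(b, a) \<in> P w"
    using reduced_profile_disagree[OF profile reduced x assms(2)] assms(3) by blast
  have "(a, b) \<notin> P y" using assms(4) ab profile_asym[OF profile] assms(2)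
    unfolding between_def by blast
  then have "(b, a) \<in> P y"
    using profile_total[OF profile y] profile_pair_in[OF profile x ab(1)] by blast
  then have cut: "ab_cut T P a b {x, y}" using edge_is_ab_cut assms(1) ab(1) by blast
  have "(x, w) \<notin> (adj (T - {{x, y}}))\<^sup>*"
  proof
    assume "(x, w) \<in> (adj (T - {{x, y}}))\<^sup>*"
    then have "(a, b) \<in> P w" using ab_cut_reach_pref[OF cut x _ ab(1)] by blast
    then show False using profile_asym[OF profile assms(2)] ab(2) by blast
  qed
  with connected_graph_remove_edge[OF graph connected assms(1,2)] show ?thesis by simp
qed

text \<open>A voter between the ends of an edge would lie on both sides of that bridge.\<close>

lemma edge_no_between:
  assumes "{x, y} \<in> T" "w \<in> N" "w \<noteq> x" "w \<noteq> y"
  shows "\<not> between P x y w"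
proof
  assume "between P x y w"
  then have "between P y x w" by (auto simp: between_def)
  have "(y, w) \<in> (adj (T - {{x, y}}))\<^sup>*"
    using between_edge_reach[OF assms(1-3) \<open>between P x y w\<close>] .
  moreover have "(x, w) \<in> (adj (T - {{x, y}}))\<^sup>*"
    using between_edge_reach[of y x w] assms \<open>between P y x w\<close> by (simp add: insert_commute)
  ultimately have "(x, y) \<in> (adj (T - {{x, y}}))\<^sup>*"
    by (meson adj_rtrancl_sym rtrancl_trans)
  then show False using edge_is_bridge assms(1) by blast
qed

text \<open>For a non-edge {u,v}, the neighbour of u through which a walk from u finally leaves
towards v lies between u and v.\<close>

lemma non_edge_between:
  assumes "u \<in> N" "v \<in> N" "u \<noteq> v" "{u, v} \<notin> T"
  shows "\<exists>w\<in>N. w \<noteq> u \<and> w \<noteq> v \<and> between P u v w"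
proof -
  have "(u, v) \<in> (adj T)\<^sup>*" using connected_graphD[OF connected assms(1,2)] .
  then obtain w where uw: "{u, w} \<in> T" and wv: "(w, v) \<in> (adj (T - {e. u \<in> e}))\<^sup>*"
    using rtrancl_adj_last_exit[OF _ not_sym[OF assms(3)]] by blast
  have w: "w \<in> N" "w \<noteq> u" using edgeD[OF uw] by auto
  have "w \<noteq> v" using uw assms(4) by auto
  moreover have "between P u v w"
    unfolding between_def
  proof (intro allI impI, elim conjE)
    fix c d assume cd: "(c, d) \<in> P u" "(c, d) \<in> P v"
    then have cd_in: "c \<in> A \<and> d \<in> A \<and> c \<noteq> d" using profile_pair_in[OF profile assms(1)] by blast
    show "(c, d) \<in> P w"
    proof (rule ccontr)
      assume "(c, d) \<notin> P w"
      then have dc: "(d, c) \<in> P w"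
        using profile_total[OF profile w(1)] cd_in by blast
      have cut: "ab_cut T P d c {u, w}"
        using ab_cut_swap[OF edge_is_ab_cut[OF uw cd(1) dc]] .
      have "(w, v) \<in> (adj (T - {{u, w}}))\<^sup>*"
        using wv adj_rtrancl_mono[of "T - {e. u \<in> e}" "T - {{u, w}}"] by blast
      then have "(d, c) \<in> P v" using ab_cut_reach_pref[OF cut w(1) _ dc] by blast
      then show False using profile_asym[OF profile assms(2) cd(2)] by blast
    qed
  qed
  ultimately show ?thesis using w by blast
qed

lemma edges_eq_betweenness_edges: "T = betweenness_edges P N"
proof (intro set_eqI iffI)
  fix e assume "e \<in> T"
  then obtain u v where e: "e = {u, v}"
    using graph unfolding is_graph_def by blast
  with \<open>e \<in> T\<close> have uv: "{u, v} \<in> T" by simp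
  then have "u \<in> N" "v \<in> N" "u \<noteq> v" using edgeD by blast+
  moreover have "\<forall>w\<in>N. between P u v w \<longrightarrow> w = u \<or> w = v"
    using edge_no_between[OF uv] by blast
  ultimately show "e \<in> betweenness_edges P N"
    unfolding betweenness_edges_def e by blast
next
  fix e assume "e \<in> betweenness_edges P N"
  then obtain u v where e: "e = {u, v}" and uv: "u \<in> N" "v \<in> N" "u \<noteq> v"
    and no_between: "\<forall>w\<in>N. between P u v w \<longrightarrow> w = u \<or> w = v"
    unfolding betweenness_edges_def by blast
  have "{u, v} \<in> T" using non_edge_between[OF uv] no_between by blast
  then show "e \<in> T" using e by simp
qed

end

theorem theorem4:
  fixes A :: "'a set" and n :: nat and P :: "nat \<Rightarrow> ('a \<times> 'a) set"
  assumes "finite A"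
    and "profile A {1..n} P"
    and "reduced {1..n} P"
    and "\<exists>T. is_tree {1..n} T \<and> single_crossing_tree A {1..n} P T"
  shows "\<exists>!T. is_tree {1..n} T \<and> single_crossing_tree A {1..n} P T \<and> minimal_tree A P T"
proof -
  have sc_graph: "single_crossing_graph A {1..n} P T"
    if "is_tree {1..n} T" "single_crossing_tree A {1..n} P T" for T
    using that assms(2,3) unfolding single_crossing_graph_def is_tree_def by blast
  obtain T where T: "is_tree {1..n} T" "single_crossing_tree A {1..n} P T"
    using assms(4) by blast
  show ?thesis
  proof (rule ex1I[of _ T])
    show "is_tree {1..n} T \<and> single_crossing_tree A {1..n} P T \<and> minimal_tree A P T"
      using T single_crossing_graph.minimal_tree[OF sc_graph[OF T]] by blast
  next
    fix T' assume "is_tree {1..n} T' \<and> single_crossing_tree A {1..n} P T' \<and> minimal_tree A P T'"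
    then have "T' = betweenness_edges P {1..n}"
      using single_crossing_graph.edges_eq_betweenness_edges sc_graph by blast
    also have "\<dots> = T"
      using single_crossing_graph.edges_eq_betweenness_edges[OF sc_graph[OF T]] by simp
    finally show "T' = T" .
  qed
qed

end
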